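(* Let $N\ge 1$, $\sigma\in(0,1)$, $c>0$ and $q\in(1-\sigma,1)$. Then the client-server mechanism with parameters $(\sigma,c,q)$ is $\epsilon$-differentially private with $\epsilon=\frac{q}{c(q+\sigma-1)}$. That is, for every $\delta\ge 0$, every pair of $\delta$-adjacent initial states $\theta(0),\theta'(0)\in\mathbb{R}^N$, and every measurable set $\mathit{Obs}$ of observation sequences, $$\Pr\big[(x(t),y(t))_{t\ge0}\in \mathit{Obs}\mid \theta(0)\big]\le e^{\epsilon\delta}\,\Pr\big[(x(t),y(t))_{t\ge0}\in \mathit{Obs}\mid \theta'(0)\big].$$
   Context: $Lap(b)$ denotes the Laplace distribution on $\mathbb{R}$ with density $p_L(x\mid b)=\frac{1}{2b}e^{-|x|/b}$. Client-server mechanism with parameters $\sigma\in(0,1)$, $c>0$, $q\in(0,1)$: there are $N$ clients with real initial states $\theta_1(0),\dots,\theta_N(0)$ and one server. At each round $t=0,1,2,\dots$: (i) each client $i$ sends $x_i(t)=\theta_i(t)+\eta_i(t)$ to the server, where the $\eta_i(t)$ ($i\in[N]$, $t\ge0$) are mutually independent with $\eta_i(t)\sim Lap(cq^t)$; (ii) the server sets its state $y(t)=\frac1N\sum_{i=1}^N x_i(t)$; (iii) the server sends $y(t)$ to all clients; (iv) each client updates $\theta_i(t+1)=(1-\sigma)\theta_i(t)+\sigma y(t)$. The adversary observes the sequence $(x(t),y(t))_{t\ge0}$ (all messages and the server's state). Two vectors $\theta,\theta'\in\mathbb{R}^N$ are $\delta$-adjacent ($\delta\ge0$) if there is one index $i$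 with $|\theta_i-\theta'_i|\le\delta$ and $\theta_j=\theta'_j$ for all $j\ne i$. *)

theory Defs
  imports "HOL-Probability.Probability"
begin

definition laplace :: "real \<Rightarrow> real measure" where
  "laplace b = density lborel (\<lambda>x. ennreal (exp (- \<bar>x\<bar> / b) / (2 * b)))"

definition noise_space :: "nat \<Rightarrow> real \<Rightarrow> real \<Rightarrow> (nat \<Rightarrow> nat \<Rightarrow> real) measure" where
  "noise_space N c q = (\<Pi>\<^sub>M t\<in>UNIV. \<Pi>\<^sub>M i\<in>{..<N}. laplace (c * q ^ t))"

fun cs_state :: "nat \<Rightarrow> real \<Rightarrow> (nat \<Rightarrow> real) \<Rightarrow> (nat \<Rightarrow> nat \<Rightarrow> real) \<Rightarrow> nat \<Rightarrow> nat \<Rightarrow> real"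
  and cs_server :: "nat \<Rightarrow> real \<Rightarrow> (nat \<Rightarrow> real) \<Rightarrow> (nat \<Rightarrow> nat \<Rightarrow> real) \<Rightarrow> nat \<Rightarrow> real" where
  "cs_state N \<sigma> \<theta>0 \<eta> 0 = \<theta>0"
| "cs_state N \<sigma> \<theta>0 \<eta> (Suc t) =
     (\<lambda>i. (1 - \<sigma>) * cs_state N \<sigma> \<theta>0 \<eta> t i + \<sigma> * cs_server N \<sigma> \<theta>0 \<eta> t)"
| "cs_server N \<sigma> \<theta>0 \<eta> t =
     (\<Sum>i<N. cs_state N \<sigma> \<theta>0 \<eta> t i + \<eta> t i) / real N"

text \<open>Observation of the adversary: the messages x(t) (restricted to the N clients)
  and the server state y(t), for all rounds t.\<close>
definition cs_obs :: "nat \<Rightarrow> real \<Rightarrow> (nat \<Rightarrow> real) \<Rightarrow> (nat \<Rightarrow> nat \<Rightarrow> real) \<Rightarrow> nat \<Rightarrow> (nat \<Rightarrow> real) \<times> real" where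
  "cs_obs N \<sigma> \<theta>0 \<eta> = (\<lambda>t. ((\<lambda>i\<in>{..<N}. cs_state N \<sigma> \<theta>0 \<eta> t i + \<eta> t i),
                             cs_server N \<sigma> \<theta>0 \<eta> t))"

definition obs_space :: "nat \<Rightarrow> (nat \<Rightarrow> (nat \<Rightarrow> real) \<times> real) measure" where
  "obs_space N = (\<Pi>\<^sub>M t\<in>UNIV. (\<Pi>\<^sub>M i\<in>{..<N}. lborel) \<Otimes>\<^sub>M lborel)"

definition adjacent :: "nat \<Rightarrow> real \<Rightarrow> (nat \<Rightarrow> real) \<Rightarrow> (nat \<Rightarrow> real) \<Rightarrow> bool" where
  "adjacent N \<delta> \<theta> \<theta>' \<longleftrightarrow>
     (\<exists>i<N. \<bar>\<theta> i - \<theta>' i\<bar> \<le> \<delta> \<and> (\<forall>j<N. j \<noteq> i \<longrightarrow> \<theta> j = \<theta>' j))"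

end

theory Submission
  imports Defs
begin

(* Two runs from delta-adjacent initial states theta, theta' (differing by
   d at client i0) are coupled through their noise: raising client i0's noise in round t
   by (1 - sigma)^t d makes the run from theta' send exactly the messages of the run
   from theta (cs_obs_noise_shift).  So the event "observation in Obs" under theta is the
   preimage, under this noise shift, of the same event under theta', and it remains to
   bound how much the shift can increase probabilities.  For one Laplace variable of
   scale b a shift by s costs a factor exp(|s|/b); the costs of all rounds form a
   convergent geometric series (shift_cost_sums). *)

(* This is the measure-theoretic form of
   pure (epsilon-)differential privacy with K = exp epsilon. *)
definition dominated :: "'a measure \<Rightarrow> 'a measure \<Rightarrow> ennreal \<Rightarrow> bool" where
  "dominated N M K \<longleftrightarrow> sets N = sets M \<and> (\<forall>A\<in>sets M. emeasure N A \<le> K * emeasure M A)"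

lemma dominated_sets_eq: "dominated N M K \<Longrightarrow> sets N = sets M"
  unfolding dominated_def by simp

lemma dominatedD: "dominated N M K \<Longrightarrow> A \<in> sets M \<Longrightarrow> emeasure N A \<le> K * emeasure M A"
  unfolding dominated_def by blast

lemma dominated_refl: "dominated M M 1"
  unfolding dominated_def by simp

lemma dominated_mono:
  assumes "dominated N M K" and "K \<le> K'"
  shows "dominated N M K'"
  using assms unfolding dominated_def by (meson mult_right_mono order.trans zero_le)

(* Every measure lies below the outer measure generated by its values on any family of
   measurable sets (countable subadditivity). *)
lemma emeasure_le_outer_measure:
  assumes "G \<subseteq> sets N"
  shows "emeasure N A \<le> outer_measure G (emeasure N) A"
  unfolding outer_measure_def
proof (rule INF_greatest, clarify)
  fix C :: "nat \<Rightarrow> _" assume C: "range C \<subseteq> G" "A \<subseteq> (\<Union>i. C i)"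
  then have CN: "range C \<subseteq> sets N" using assms by blast
  have "emeasure N A \<le> emeasure N (\<Union>i. C i)" using C(2) CN by (intro emeasure_mono) auto
  also have "\<dots> \<le> (\<Sum>i. emeasure N (C i))" using CN by (rule emeasure_subadditive_countably)
  finally show "emeasure N A \<le> (\<Sum>i. emeasure N (C i))" .
qed

lemma outer_measure_mono_fun:
  assumes "\<And>B. B \<in> G \<Longrightarrow> f B \<le> g B"
  shows "outer_measure G f A \<le> outer_measure G g A"
  unfolding outer_measure_def
  using assms by (intro INF_superset_mono order_refl suminf_le) auto

(* The outer measure is additive on the sigma-algebra generated
   by the algebra (Caratheodory); splitting the whole space into A and its complement
   and cancelling the finite total mass gives the inequality. *)
lemma outer_measure_le_emeasure:
  assumes alg: "algebra \<Omega> G" and sp: "space M = \<Omega>" and sM: "sets M = sigma_sets \<Omega> G"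
    and fin: "finite_measure M" and A: "A \<in> sets M"
  shows "outer_measure G (emeasure M) A \<le> emeasure M A"
proof -
  interpret algebra \<Omega> G by (rule alg)
  interpret finite_measure M by (rule fin)
  define Om where "Om = outer_measure G (emeasure M)"
  have GM: "G \<subseteq> sets M" using sM sigma_sets.Basic by blast
  have pos: "positive G (emeasure M)" by (simp add: positive_def)
  have ca: "countably_additive G (emeasure M)"
    using GM by (auto simp: countably_additive_def intro: suminf_emeasure)
  have add: "additive G (emeasure M)" by (rule countably_additive_additive[OF pos ca])
  have inc: "increasing G (emeasure M)" by (rule additive_increasing[OF pos add])
  define L where "L = lambda_system \<Omega> (Pow \<Omega>) Om"
  have "measure_space \<Omega> L Om"
    unfolding L_def Om_def
    by (rule sigma_algebra.caratheodory_lemma[OF sigma_algebra_Pow outer_measure_space_outer_measure[OF pos inc]])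
  then have "sigma_algebra \<Omega> L" by (simp add: measure_space_def)
  moreover have "G \<subseteq> L" unfolding L_def Om_def by (rule algebra_subset_lambda_system[OF pos inc add])
  ultimately have "sigma_sets \<Omega> G \<subseteq> L" by (rule sigma_algebra.sigma_sets_subset)
  then have "A \<in> L" using A sM by blast
  moreover have AO: "A \<subseteq> \<Omega>" using A sets.sets_into_space sp by blast
  ultimately have split: "Om A + Om (\<Omega> - A) = Om \<Omega>"
    unfolding L_def lambda_system_def by (auto dest!: bspec[where x=\<Omega>] simp: Int_absorb2 Int_absorb1)
  have "Om \<Omega> = emeasure M \<Omega>" unfolding Om_def by (rule outer_measure_agrees[OF pos ca top])
  also have "\<dots> = emeasure M A + emeasure M (\<Omega> - A)"
    using A AO sp by (subst plus_emeasure) (auto simp: Un_absorb1)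
  also have "\<dots> \<le> emeasure M A + Om (\<Omega> - A)"
    unfolding Om_def using GM by (intro add_left_mono emeasure_le_outer_measure)
  finally have "Om (\<Omega> - A) + Om A \<le> Om (\<Omega> - A) + emeasure M A"
    using split by (simp add: add.commute)
  moreover have "Om (\<Omega> - A) \<noteq> \<top>"
    using split \<open>Om \<Omega> = emeasure M \<Omega>\<close> by (metis emeasure_finite ennreal_add_eq_top)
  ultimately show ?thesis unfolding Om_def[symmetric] by (simp add: ennreal_add_left_cancel_le)
qed

(* Domination of finite measures need only be checked on a generating algebra: compare
   both measures with the outer measures generated by N and by the scaled measure K M. *)
lemma dominated_on_generator:
  assumes alg: "algebra \<Omega> G" and sp: "space M = \<Omega>" and sM: "sets M = sigma_sets \<Omega> G"
    and sN: "sets N = sets M" and fin: "finite_measure M" and K: "K < \<top>"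
    and gen: "\<And>A. A \<in> G \<Longrightarrow> emeasure N A \<le> K * emeasure M A"
  shows "dominated N M K"
  unfolding dominated_def
proof (intro conjI ballI sN)
  fix A assume A: "A \<in> sets M"
  have GM: "G \<subseteq> sets M" using sM sigma_sets.Basic by blast
  have fin_scaled: "finite_measure (scale_measure K M)"
    using K finite_measure.emeasure_finite[OF fin]
    by (intro finite_measureI) (auto simp: space_scale_measure ennreal_mult_eq_top_iff)
  have "emeasure N A \<le> outer_measure G (emeasure N) A"
    using GM sN by (intro emeasure_le_outer_measure) auto
  also have "\<dots> \<le> outer_measure G (emeasure (scale_measure K M)) A"
    using gen by (intro outer_measure_mono_fun) simp
  also have "\<dots> \<le> emeasure (scale_measure K M) A"
    using alg sp sM fin_scaled A by (intro outer_measure_le_emeasure) (auto simp: space_scale_measure)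
  finally show "emeasure N A \<le> K * emeasure M A" by simp
qed

lemma dominated_nn_integral:
  assumes d: "dominated N M K" and f: "f \<in> borel_measurable M"
  shows "(\<integral>\<^sup>+x. f x \<partial>N) \<le> K * (\<integral>\<^sup>+x. f x \<partial>M)"
  using f
proof (induct rule: borel_measurable_induct)
  case (cong f g)
  have "space N = space M" using dominated_sets_eq[OF d] by (rule sets_eq_imp_space_eq)
  then have "(\<integral>\<^sup>+x. f x \<partial>N) = (\<integral>\<^sup>+x. g x \<partial>N)" "(\<integral>\<^sup>+x. f x \<partial>M) = (\<integral>\<^sup>+x. g x \<partial>M)"
    using cong(3) by (auto intro!: nn_integral_cong)
  then show ?case using cong(4) by simp
next
  case (set A)
  then show ?case using dominatedD[OF d set] dominated_sets_eq[OF d] by simp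
next
  case (mult u c)
  have uN: "u \<in> borel_measurable N" using mult(2) dominated_sets_eq[OF d] by (simp cong: measurable_cong_sets)
  have "(\<integral>\<^sup>+x. c * u x \<partial>N) = c * (\<integral>\<^sup>+x. u x \<partial>N)" using uN by (simp add: nn_integral_cmult)
  also have "\<dots> \<le> c * (K * (\<integral>\<^sup>+x. u x \<partial>M))" using mult(4) by (rule mult_left_mono) simp
  also have "\<dots> = K * (\<integral>\<^sup>+x. c * u x \<partial>M)" using mult(2) by (simp add: nn_integral_cmult ac_simps)
  finally show ?case .
next
  case (add u v)
  have N: "u \<in> borel_measurable N" "v \<in> borel_measurable N"
    using add(1,4) dominated_sets_eq[OF d] by (simp_all cong: measurable_cong_sets)
  have "(\<integral>\<^sup>+x. v x + u x \<partial>N) = (\<integral>\<^sup>+x. v x \<partial>N) + (\<integral>\<^sup>+x. u x \<partial>N)" using N by (simp add: nn_integral_add)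
  also have "\<dots> \<le> K * (\<integral>\<^sup>+x. v x \<partial>M) + K * (\<integral>\<^sup>+x. u x \<partial>M)" using add by (intro add_mono) auto
  also have "\<dots> = K * (\<integral>\<^sup>+x. v x + u x \<partial>M)" using add(1,4) by (simp add: nn_integral_add distrib_left)
  finally show ?case .
next
  case (seq U)
  have UN: "\<And>i. U i \<in> borel_measurable N" using seq(1) dominated_sets_eq[OF d] by (simp cong: measurable_cong_sets)
  have "(\<integral>\<^sup>+x. (SUP i. U i) x \<partial>N) = (SUP i. \<integral>\<^sup>+x. U i x \<partial>N)"
    unfolding SUP_apply by (rule nn_integral_monotone_convergence_SUP[OF seq(4) UN])
  also have "\<dots> \<le> (SUP i. K * \<integral>\<^sup>+x. U i x \<partial>M)" using seq(3) by (intro SUP_mono) auto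
  also have "\<dots> = K * (SUP i. \<integral>\<^sup>+x. U i x \<partial>M)" by (simp add: SUP_mult_left_ennreal)
  also have "(SUP i. \<integral>\<^sup>+x. U i x \<partial>M) = (\<integral>\<^sup>+x. (SUP i. U i) x \<partial>M)"
    unfolding SUP_apply by (rule nn_integral_monotone_convergence_SUP[OF seq(4) seq(1), symmetric])
  finally show ?case .
qed

(* Binary products multiply the domination constants (integrate the sections). *)
lemma dominated_pair:
  assumes d1: "dominated N1 M1 C1" and d2: "dominated N2 M2 C2"
    and fin_M2: "finite_measure M2" and fin_N2: "finite_measure N2"
  shows "dominated (N1 \<Otimes>\<^sub>M N2) (M1 \<Otimes>\<^sub>M M2) (C1 * C2)"
  unfolding dominated_def
proof (intro conjI ballI)
  interpret M2: finite_measure M2 by (rule fin_M2)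
  interpret N2: finite_measure N2 by (rule fin_N2)
  show sets_eq: "sets (N1 \<Otimes>\<^sub>M N2) = sets (M1 \<Otimes>\<^sub>M M2)"
    using dominated_sets_eq[OF d1] dominated_sets_eq[OF d2] by (rule sets_pair_measure_cong)
  fix A assume A: "A \<in> sets (M1 \<Otimes>\<^sub>M M2)"
  have slice: "(\<lambda>x. emeasure M2 (Pair x -` A)) \<in> borel_measurable M1"
    by (rule M2.measurable_emeasure_Pair[OF A])
  have "emeasure (N1 \<Otimes>\<^sub>M N2) A = (\<integral>\<^sup>+x. emeasure N2 (Pair x -` A) \<partial>N1)"
    using A sets_eq by (intro N2.emeasure_pair_measure_alt) simp
  also have "\<dots> \<le> (\<integral>\<^sup>+x. C2 * emeasure M2 (Pair x -` A) \<partial>N1)"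
    using dominatedD[OF d2 sets_Pair1[OF A]] by (intro nn_integral_mono)
  also have "\<dots> \<le> C1 * (\<integral>\<^sup>+x. C2 * emeasure M2 (Pair x -` A) \<partial>M1)"
    using slice by (intro dominated_nn_integral[OF d1]) simp
  also have "\<dots> = C1 * (C2 * emeasure (M1 \<Otimes>\<^sub>M M2) A)"
    using slice by (simp add: nn_integral_cmult M2.emeasure_pair_measure_alt[OF A])
  finally show "emeasure (N1 \<Otimes>\<^sub>M N2) A \<le> C1 * C2 * emeasure (M1 \<Otimes>\<^sub>M M2) A"
    by (simp add: ac_simps)
qed

lemma dominated_distr:
  assumes d: "dominated N M K" and st: "sets T' = sets T" and g: "g \<in> measurable M T"
  shows "dominated (distr N T' g) (distr M T g) K"
  unfolding dominated_def
proof (intro conjI ballI)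
  show "sets (distr N T' g) = sets (distr M T g)" using st by simp
  have gN: "g \<in> measurable N T'" using g dominated_sets_eq[OF d] st by (simp cong: measurable_cong_sets)
  have space_eq: "space N = space M" using dominated_sets_eq[OF d] by (rule sets_eq_imp_space_eq)
  fix A assume A: "A \<in> sets (distr M T g)"
  have "emeasure (distr N T' g) A = emeasure N (g -` A \<inter> space M)"
    using A st gN space_eq by (subst emeasure_distr) auto
  also have "\<dots> \<le> K * emeasure M (g -` A \<inter> space M)"
    using A g by (intro dominatedD[OF d] measurable_sets) auto
  also have "emeasure M (g -` A \<inter> space M) = emeasure (distr M T g) A"
    using A g by (subst emeasure_distr) auto
  finally show "emeasure (distr N T' g) A \<le> K * emeasure (distr M T g) A" .
qed

lemma dominated_PiM_finite:
  fixes J :: "'i set" and M N :: "'i \<Rightarrow> 'a measure"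
  assumes "finite J"
    and "\<And>i. i \<in> J \<Longrightarrow> prob_space (M i)" and "\<And>i. i \<in> J \<Longrightarrow> prob_space (N i)"
    and "\<And>i. i \<in> J \<Longrightarrow> dominated (N i) (M i) (C i)"
  shows "dominated (PiM J N) (PiM J M) (\<Prod>i\<in>J. C i)"
  using assms
proof (induction J rule: finite_induct)
  case empty
  show ?case using dominated_refl[of "PiM {} M"] by (simp add: PiM_empty)
next
  case (insert i J)
  have IH: "dominated (PiM J N) (PiM J M) (\<Prod>i\<in>J. C i)" using insert by blast
  have fin: "finite_measure (PiM J M)" "finite_measure (PiM J N)"
    using insert.prems by (auto intro!: prob_space.axioms(1) prob_space_PiM)
  have "dominated (N i \<Otimes>\<^sub>M PiM J N) (M i \<Otimes>\<^sub>M PiM J M) (C i * (\<Prod>i\<in>J. C i))"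
    using insert.prems(3) IH fin by (intro dominated_pair) auto
  moreover have "sets (PiM (insert i J) N) = sets (PiM (insert i J) M)"
    using insert.prems(3) by (intro sets_PiM_cong) (auto dest: dominated_sets_eq)
  moreover have "(\<lambda>(x, X). X(i := x)) \<in> measurable (M i \<Otimes>\<^sub>M PiM J M) (PiM (insert i J) M)"
    by measurable
  ultimately have "dominated (distr (N i \<Otimes>\<^sub>M PiM J N) (PiM (insert i J) N) (\<lambda>(x, X). X(i := x)))
      (distr (M i \<Otimes>\<^sub>M PiM J M) (PiM (insert i J) M) (\<lambda>(x, X). X(i := x))) (C i * (\<Prod>i\<in>J. C i))"
    by (rule dominated_distr)
  also have "distr (N i \<Otimes>\<^sub>M PiM J N) (PiM (insert i J) N) (\<lambda>(x, X). X(i := x)) = PiM (insert i J) N"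
    using insert.prems(2) insert.hyps by (intro distr_pair_PiM_eq_PiM) auto
  also have "distr (M i \<Otimes>\<^sub>M PiM J M) (PiM (insert i J) M) (\<lambda>(x, X). X(i := x)) = PiM (insert i J) M"
    using insert.prems(1) insert.hyps by (intro distr_pair_PiM_eq_PiM) auto
  finally show ?case using insert.hyps by simp
qed

(* By dominated_on_generator it
   suffices to check cylinder sets, which are handled by the finite case. *)
lemma (in product_prob_space) dominated_PiM:
  assumes pN: "\<And>i. prob_space (N i)" and d: "\<And>i. i \<in> I \<Longrightarrow> dominated (N i) (M i) (C i)"
    and bound: "\<And>J. finite J \<Longrightarrow> J \<subseteq> I \<Longrightarrow> (\<Prod>i\<in>J. C i) \<le> K" and K: "K < \<top>"
  shows "dominated (PiM I N) (PiM I M) K"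
proof (rule dominated_on_generator[OF algebra_generator refl sets_PiM_generator _ _ K])
  interpret N: product_prob_space N I
    by (intro product_prob_spaceI pN)
  have sN: "\<And>i. i \<in> I \<Longrightarrow> sets (N i) = sets (M i)" using d dominated_sets_eq by blast
  then have spN: "\<And>i. i \<in> I \<Longrightarrow> space (N i) = space (M i)" using sets_eq_imp_space_eq by blast
  show "sets (PiM I N) = sets (PiM I M)" using sN by (rule sets_PiM_cong[OF refl])
  show "finite_measure (PiM I M)" by (rule P.finite_measure_axioms)
  fix A assume "A \<in> generator"
  then obtain J X where J: "finite J" "J \<subseteq> I" and X: "X \<in> sets (PiM J M)" and A: "A = prod_emb I M J X"
    by (auto elim!: generator.cases)
  have XN: "X \<in> sets (PiM J N)" using X sN J by (subst sets_PiM_cong[OF refl]) auto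
  have emb_eq: "prod_emb I N J X = prod_emb I M J X"
    unfolding prod_emb_def using spN by (metis PiE_cong)
  have "emeasure (PiM I N) A = emeasure (PiM J N) X"
    unfolding A emb_eq[symmetric] by (rule N.emeasure_PiM_emb'[OF J(2) J(1) XN])
  also have "\<dots> \<le> (\<Prod>i\<in>J. C i) * emeasure (PiM J M) X"
    using J d pN M.prob_space_axioms X by (intro dominatedD[OF dominated_PiM_finite]) auto
  also have "\<dots> \<le> K * emeasure (PiM J M) X" using bound[OF J] by (rule mult_right_mono) simp
  also have "emeasure (PiM J M) X = emeasure (PiM I M) A"
    unfolding A by (rule emeasure_PiM_emb'[OF J(2) J(1) X, symmetric])
  finally show "emeasure (PiM I N) A \<le> K * emeasure (PiM I M) A" .
qed

lemma sets_laplace [simp, measurable_cong]: "sets (laplace b) = sets borel"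
  by (simp add: laplace_def)

(* Away from 0, twice the Laplace density is the sum of the exponential density and its
   reflection; this reduces the normalisation of Lap(b) to that of Exp(1/b). *)
lemma laplace_density_symmetrised:
  fixes b x :: real
  assumes "b > 0" and "x \<noteq> 0"
  shows "2 * ennreal (exp (- \<bar>x\<bar> / b) / (2 * b))
    = ennreal (exponential_density (1 / b) x) + ennreal (exponential_density (1 / b) (- x))"
proof -
  have "2 * ennreal (exp (- \<bar>x\<bar> / b) / (2 * b)) = ennreal (2 * (exp (- \<bar>x\<bar> / b) / (2 * b)))"
    using assms(1) by (subst ennreal_mult) auto
  also have "\<dots> = ennreal (exponential_density (1 / b) x) + ennreal (exponential_density (1 / b) (- x))"
    using assms by (cases "x < 0") (auto simp: exponential_density_def)
  finally show ?thesis .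
qed

lemma prob_space_laplace:
  assumes b: "b > 0"
  shows "prob_space (laplace b)"
proof (rule prob_spaceI)
  define e where "e = (\<lambda>x. ennreal (exponential_density (1 / b) x))"
  have e1: "(\<integral>\<^sup>+x. e x \<partial>lborel) = 1"
  proof -
    interpret prob_space "density lborel (exponential_density (1/b))"
      using b by (intro prob_space_exponential_density) simp
    show ?thesis using emeasure_space_1 by (simp add: e_def emeasure_density)
  qed
  have e2: "(\<integral>\<^sup>+x. e (- x) \<partial>lborel) = 1"
    using nn_integral_real_affine[where c="-1" and t=0 and f=e] e1 by (simp add: e_def)
  have "2 * (\<integral>\<^sup>+x. ennreal (exp (- \<bar>x\<bar> / b) / (2 * b)) \<partial>lborel)
      = (\<integral>\<^sup>+x. 2 * ennreal (exp (- \<bar>x\<bar> / b) / (2 * b)) \<partial>lborel)"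
    by (simp add: nn_integral_cmult)
  also have "\<dots> = (\<integral>\<^sup>+x. e x + e (- x) \<partial>lborel)"
    using b unfolding e_def
    by (intro nn_integral_cong_AE eventually_mono[OF AE_lborel_singleton[of 0]] laplace_density_symmetrised)
       auto
  also have "\<dots> = 2" using e1 e2 by (simp add: nn_integral_add e_def)
  finally have "2 * (\<integral>\<^sup>+x. ennreal (exp (- \<bar>x\<bar> / b) / (2 * b)) \<partial>lborel) = 2 * 1" by simp
  then have "(\<integral>\<^sup>+x. ennreal (exp (- \<bar>x\<bar> / b) / (2 * b)) \<partial>lborel) = 1"
    by (subst (asm) ennreal_mult_cancel_left) auto
  then show "emeasure (laplace b) (space (laplace b)) = 1"
    by (simp add: laplace_def emeasure_density)
qed

(* Shifting the Laplace density by s changes it at most by the factor exp(|s|/b)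
   (triangle inequality in the exponent). *)
lemma laplace_density_shift_le:
  fixes y s b :: real
  assumes b: "b > 0"
  shows "exp (- \<bar>y - s\<bar> / b) / (2 * b) \<le> exp (\<bar>s\<bar> / b) * (exp (- \<bar>y\<bar> / b) / (2 * b))"
proof -
  have "- \<bar>y - s\<bar> \<le> \<bar>s\<bar> - \<bar>y\<bar>" using abs_triangle_ineq[of "y - s" s] by simp
  then have "- \<bar>y - s\<bar> / b \<le> (\<bar>s\<bar> - \<bar>y\<bar>) / b" using b by (intro divide_right_mono) auto
  then have "- \<bar>y - s\<bar> / b \<le> \<bar>s\<bar> / b + - \<bar>y\<bar> / b" by (simp add: diff_divide_distrib)
  then have "exp (- \<bar>y - s\<bar> / b) \<le> exp (\<bar>s\<bar> / b) * exp (- \<bar>y\<bar> / b)" by (simp add: exp_add[symmetric])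
  then show ?thesis using b by (simp add: divide_right_mono)
qed

lemma laplace_shift_dominated:
  assumes b: "b > 0"
  shows "dominated (distr (laplace b) (laplace b) (\<lambda>x. x + s)) (laplace b) (ennreal (exp (\<bar>s\<bar> / b)))"
  unfolding dominated_def
proof (intro conjI ballI)
  define p where "p = (\<lambda>x::real. ennreal (exp (- \<bar>x\<bar> / b) / (2 * b)))"
  have L: "laplace b = density lborel p" unfolding laplace_def p_def ..
  have [measurable]: "p \<in> borel_measurable borel" unfolding p_def by measurable
  show "sets (distr (laplace b) (laplace b) (\<lambda>x. x + s)) = sets (laplace b)" by simp
  fix A assume "A \<in> sets (laplace b)"
  then have [measurable]: "A \<in> sets borel" by simp
  have "(\<lambda>x. x + s) -` A \<in> sets borel"
    using measurable_sets[of "\<lambda>x::real. x + s" borel borel A] by simp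
  then have "emeasure (distr (laplace b) (laplace b) (\<lambda>x. x + s)) A = (\<integral>\<^sup>+x. p x * indicator A (x + s) \<partial>lborel)"
    unfolding L by (subst emeasure_distr, simp_all, subst emeasure_density)
      (auto intro!: nn_integral_cong simp: indicator_def)
  also have "\<dots> = (\<integral>\<^sup>+y. p (y - s) * indicator A y \<partial>lborel)"
    by (subst nn_integral_real_affine[where c=1 and t=s]) (auto simp: add.commute)
  also have "\<dots> \<le> (\<integral>\<^sup>+y. ennreal (exp (\<bar>s\<bar> / b)) * (p y * indicator A y) \<partial>lborel)"
  proof (rule nn_integral_mono)
    fix y
    have "p (y - s) \<le> ennreal (exp (\<bar>s\<bar> / b)) * p y"
      unfolding p_def using laplace_density_shift_le[OF b, of y s] b
      by (simp add: ennreal_mult[symmetric] ennreal_leI)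
    then show "p (y - s) * indicator A y \<le> ennreal (exp (\<bar>s\<bar> / b)) * (p y * indicator A y)"
      by (auto simp: indicator_def)
  qed
  also have "\<dots> = ennreal (exp (\<bar>s\<bar> / b)) * emeasure (laplace b) A"
    unfolding L by (simp add: nn_integral_cmult emeasure_density)
  finally show "emeasure (distr (laplace b) (laplace b) (\<lambda>x. x + s)) A
    \<le> ennreal (exp (\<bar>s\<bar> / b)) * emeasure (laplace b) A" .
qed

lemma measurable_PiM_map:
  assumes f: "\<And>i. i \<in> I \<Longrightarrow> f i \<in> measurable (M i) (M i)"
  shows "(\<lambda>x. \<lambda>i\<in>I. f i (x i)) \<in> measurable (PiM I M) (PiM I M)"
proof (rule measurable_restrict)
  fix i assume i: "i \<in> I"
  show "(\<lambda>x. f i (x i)) \<in> measurable (PiM I M) (M i)"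
    using measurable_compose[OF measurable_component_singleton[OF i, of M] f[OF i]] by simp
qed

lemma (in product_prob_space) distr_PiM_map:
  assumes f: "\<And>i. i \<in> I \<Longrightarrow> f i \<in> measurable (M i) (M i)"
  shows "distr (PiM I M) (PiM I M) (\<lambda>x. \<lambda>i\<in>I. f i (x i)) = PiM I (\<lambda>i. distr (M i) (M i) (f i))"
proof -
  define N where "N = (\<lambda>i. if i \<in> I then distr (M i) (M i) (f i) else M i)"
  interpret N: product_prob_space N I
    by (intro product_prob_spaceI) (auto simp: N_def M.prob_space_axioms intro!: M.prob_space_distr f)
  have sN: "\<And>i. sets (N i) = sets (M i)" and spN: "\<And>i. space (N i) = space (M i)"
    by (simp_all add: N_def)
  have "distr (PiM I M) (PiM I M) (\<lambda>x. \<lambda>i\<in>I. f i (x i)) = PiM I N"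
  proof (rule N.PiM_eq)
    show "sets (distr (PiM I M) (PiM I M) (\<lambda>x. \<lambda>i\<in>I. f i (x i))) = sets (PiM I N)"
      unfolding sets_distr by (rule sets_PiM_cong[OF refl sN[symmetric]])
    fix J F assume J: "finite J" "J \<subseteq> I" and F: "\<And>j. j \<in> J \<Longrightarrow> F j \<in> sets (N j)"
    have FM: "\<And>j. j \<in> J \<Longrightarrow> F j \<in> sets (M j)" using F sN by blast
    have emb_eq: "prod_emb I N J (Pi\<^sub>E J F) = prod_emb I M J (Pi\<^sub>E J F)"
      unfolding prod_emb_def spN ..
    have preimage: "(\<lambda>x. \<lambda>i\<in>I. f i (x i)) -` prod_emb I M J (Pi\<^sub>E J F) \<inter> space (PiM I M) =
        prod_emb I M J (Pi\<^sub>E J (\<lambda>j. f j -` F j \<inter> space (M j)))"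
      using J f[THEN measurable_space] by (auto simp: prod_emb_def space_PiM PiE_iff subset_eq)
    have "emeasure (distr (PiM I M) (PiM I M) (\<lambda>x. \<lambda>i\<in>I. f i (x i))) (prod_emb I N J (Pi\<^sub>E J F))
        = emeasure (PiM I M) (prod_emb I M J (Pi\<^sub>E J (\<lambda>j. f j -` F j \<inter> space (M j))))"
      unfolding emb_eq using J FM measurable_PiM_map[OF f]
      by (subst emeasure_distr) (auto simp: preimage intro: sets_PiM_I_finite)
    also have "\<dots> = (\<Prod>j\<in>J. emeasure (M j) (f j -` F j \<inter> space (M j)))"
      using J FM f by (intro emeasure_PiM_emb) (auto intro: measurable_sets)
    also have "\<dots> = (\<Prod>j\<in>J. emeasure (N j) (F j))"
      using J FM f by (intro prod.cong) (auto simp: N_def emeasure_distr)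
    finally show "emeasure (distr (PiM I M) (PiM I M) (\<lambda>x. \<lambda>i\<in>I. f i (x i))) (prod_emb I N J (Pi\<^sub>E J F))
        = (\<Prod>j\<in>J. emeasure (N j) (F j))" .
  qed
  also have "PiM I N = PiM I (\<lambda>i. distr (M i) (M i) (f i))"
    by (intro PiM_cong) (auto simp: N_def)
  finally show ?thesis .
qed

definition noise_shift :: "nat \<Rightarrow> nat \<Rightarrow> (nat \<Rightarrow> real) \<Rightarrow> (nat \<Rightarrow> nat \<Rightarrow> real) \<Rightarrow> nat \<Rightarrow> nat \<Rightarrow> real" where
  "noise_shift N i0 s \<eta> = (\<lambda>t\<in>UNIV. \<lambda>i\<in>{..<N}. \<eta> t i + (if i = i0 then s t else 0))"

lemma noise_shift_measurable:
  "noise_shift N i0 s \<in> measurable (\<Pi>\<^sub>M t\<in>UNIV. \<Pi>\<^sub>M i\<in>{..<N}. laplace (b t)) (\<Pi>\<^sub>M t\<in>UNIV. \<Pi>\<^sub>M i\<in>{..<N}. laplace (b t))"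
  unfolding noise_shift_def
  by (intro measurable_PiM_map) (simp add: measurable_cong_sets[OF sets_laplace sets_laplace])

lemma noise_shift_dominated:
  fixes N i0 :: nat and b s :: "nat \<Rightarrow> real"
  defines "P \<equiv> \<Pi>\<^sub>M t\<in>UNIV. \<Pi>\<^sub>M i\<in>{..<N}. laplace (b t)"
  assumes b: "\<And>t. b t > 0" and i0: "i0 < N" and summable: "summable (\<lambda>t. \<bar>s t\<bar> / b t)"
  shows "dominated (distr P P (noise_shift N i0 s)) P (ennreal (exp (\<Sum>t. \<bar>s t\<bar> / b t)))"
proof -
  define M where "M = (\<lambda>t. \<Pi>\<^sub>M i\<in>{..<N}. laplace (b t))"
  define f where "f = (\<lambda>t i (x::real). x + (if i = i0 then s t else 0))"
  define g where "g = (\<lambda>t v. \<lambda>i\<in>{..<N}. f t i (v i))"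
  have prob_L: "\<And>t. prob_space (laplace (b t))" using b by (rule prob_space_laplace)
  have prob_M: "\<And>t. prob_space (M t)" unfolding M_def using prob_L by (intro prob_space_PiM)
  have f_meas: "\<And>t i. f t i \<in> measurable (laplace (b t)) (laplace (b t))"
    unfolding f_def by (subst measurable_cong_sets[OF sets_laplace sets_laplace]) simp
  have g_meas: "\<And>t. g t \<in> measurable (M t) (M t)"
    unfolding g_def M_def using f_meas by (rule measurable_PiM_map)
  have shift_eq: "noise_shift N i0 s = (\<lambda>\<eta>. \<lambda>t\<in>UNIV. g t (\<eta> t))"
    by (simp add: noise_shift_def g_def f_def fun_eq_iff)
  (* In round t only the coordinate i0 is moved, by s t. *)
  have round: "dominated (distr (M t) (M t) (g t)) (M t) (ennreal (exp (\<bar>s t\<bar> / b t)))" for t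
  proof -
    have "dominated (\<Pi>\<^sub>M i\<in>{..<N}. distr (laplace (b t)) (laplace (b t)) (f t i)) (M t)
        (\<Prod>i\<in>{..<N}. ennreal (exp (\<bar>if i = i0 then s t else 0\<bar> / b t)))"
      unfolding M_def f_def using prob_L f_meas laplace_shift_dominated[OF b]
      by (intro dominated_PiM_finite) (auto intro: prob_space.prob_space_distr)
    also have "(\<Prod>i\<in>{..<N}. ennreal (exp (\<bar>if i = i0 then s t else 0\<bar> / b t)))
        = (\<Prod>i\<in>{..<N}. if i = i0 then ennreal (exp (\<bar>s t\<bar> / b t)) else 1)"
      by (intro prod.cong) auto
    also have "\<dots> = ennreal (exp (\<bar>s t\<bar> / b t))" using i0 by simp
    finally show ?thesis
      unfolding M_def g_def using prob_L f_meas by (simp add: product_prob_space.distr_PiM_map product_prob_spaceI)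
  qed
  have bound: "(\<Prod>t\<in>J. ennreal (exp (\<bar>s t\<bar> / b t))) \<le> ennreal (exp (\<Sum>t. \<bar>s t\<bar> / b t))"
    if "finite J" for J
  proof -
    have "(\<Sum>t\<in>J. \<bar>s t\<bar> / b t) \<le> (\<Sum>t. \<bar>s t\<bar> / b t)"
      using summable b that by (intro sum_le_suminf) (auto intro: divide_nonneg_pos)
    then show ?thesis using that by (simp add: prod_ennreal exp_sum[symmetric] ennreal_leI)
  qed
  have "dominated (\<Pi>\<^sub>M t\<in>UNIV. distr (M t) (M t) (g t)) (\<Pi>\<^sub>M t\<in>UNIV. M t) (ennreal (exp (\<Sum>t. \<bar>s t\<bar> / b t)))"
    using prob_M g_meas round bound
    by (intro product_prob_space.dominated_PiM product_prob_spaceI prob_space.prob_space_distr) auto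
  then show ?thesis
    unfolding P_def M_def[symmetric] shift_eq
    using prob_M g_meas by (simp add: product_prob_space.distr_PiM_map product_prob_spaceI)
qed

lemma measure_le_by_coupling:
  assumes P: "prob_space P" and S: "S \<in> measurable P P"
    and dom: "dominated (distr P P S) P (ennreal K)" and K: "K \<ge> 0"
    and Y: "Y \<in> measurable P M'" and Obs: "Obs \<in> sets M'"
    and XY: "\<And>\<omega>. \<omega> \<in> space P \<Longrightarrow> Y (S \<omega>) = X \<omega>"
  shows "measure P {\<omega> \<in> space P. X \<omega> \<in> Obs} \<le> K * measure P {\<omega> \<in> space P. Y \<omega> \<in> Obs}"
proof -
  interpret P: prob_space P by (rule P)
  interpret D: prob_space "distr P P S" using S by (rule P.prob_space_distr)
  define B where "B = {\<omega> \<in> space P. Y \<omega> \<in> Obs}"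
  have B: "B \<in> sets P" unfolding B_def using Y Obs by measurable
  have "{\<omega> \<in> space P. X \<omega> \<in> Obs} = S -` B \<inter> space P"
    unfolding B_def using XY measurable_space[OF S] by auto
  then have "measure P {\<omega> \<in> space P. X \<omega> \<in> Obs} = measure (distr P P S) B"
    using S B by (simp add: measure_distr)
  moreover have "ennreal (measure (distr P P S) B) \<le> ennreal (K * measure P B)"
    using dominatedD[OF dom] B K by (simp add: D.emeasure_eq_measure P.emeasure_eq_measure ennreal_mult)
  ultimately show ?thesis unfolding B_def[symmetric] using K by simp
qed

(* Then in the run from theta' client i0's state stays lower
   by exactly (1 - sigma)^t d (the contraction of the update rule), so its messages agree
   with those of the run from theta, and the server states agree in every round. *)
lemma cs_noise_shift:
  fixes N i0 :: nat and \<sigma> d :: real and \<theta> \<theta>' :: "nat \<Rightarrow> real" and \<eta> :: "nat \<Rightarrow> nat \<Rightarrow> real"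
  defines "\<eta>' \<equiv> noise_shift N i0 (\<lambda>t. (1 - \<sigma>) ^ t * d) \<eta>"
  assumes i0: "i0 < N" and \<theta>': "\<And>j. j < N \<Longrightarrow> \<theta>' j = \<theta> j - (if j = i0 then d else 0)"
  shows "(\<forall>j<N. cs_state N \<sigma> \<theta>' \<eta>' t j = cs_state N \<sigma> \<theta> \<eta> t j - (if j = i0 then (1 - \<sigma>) ^ t * d else 0))
     \<and> cs_server N \<sigma> \<theta>' \<eta>' t = cs_server N \<sigma> \<theta> \<eta> t"
proof (induction t)
  case 0
  have st: "\<forall>j<N. cs_state N \<sigma> \<theta>' \<eta>' 0 j = cs_state N \<sigma> \<theta> \<eta> 0 j - (if j = i0 then (1 - \<sigma>) ^ 0 * d else 0)"
    using \<theta>' by simp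
  have "cs_server N \<sigma> \<theta>' \<eta>' 0 = cs_server N \<sigma> \<theta> \<eta> 0"
    unfolding cs_server.simps using st by (intro arg_cong2[where f="(/)"] sum.cong) (auto simp: \<eta>'_def noise_shift_def)
  then show ?case using st by blast
next
  case (Suc t)
  have st: "\<forall>j<N. cs_state N \<sigma> \<theta>' \<eta>' (Suc t) j = cs_state N \<sigma> \<theta> \<eta> (Suc t) j - (if j = i0 then (1 - \<sigma>) ^ Suc t * d else 0)"
  proof (intro allI impI)
    fix j assume "j < N"
    then have state: "cs_state N \<sigma> \<theta>' \<eta>' t j = cs_state N \<sigma> \<theta> \<eta> t j - (if j = i0 then (1 - \<sigma>) ^ t * d else 0)"
      and server: "cs_server N \<sigma> \<theta>' \<eta>' t = cs_server N \<sigma> \<theta> \<eta> t"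
      using Suc.IH by blast+
    show "cs_state N \<sigma> \<theta>' \<eta>' (Suc t) j = cs_state N \<sigma> \<theta> \<eta> (Suc t) j - (if j = i0 then (1 - \<sigma>) ^ Suc t * d else 0)"
      by (simp only: cs_state.simps state server) (simp add: algebra_simps)
  qed
  have "cs_server N \<sigma> \<theta>' \<eta>' (Suc t) = cs_server N \<sigma> \<theta> \<eta> (Suc t)"
    unfolding cs_server.simps[of N \<sigma> \<theta>' \<eta>' "Suc t"] cs_server.simps[of N \<sigma> \<theta> \<eta> "Suc t"]
    using st by (intro arg_cong2[where f="(/)"] sum.cong) (auto simp: \<eta>'_def noise_shift_def)
  then show ?case using st by blast
qed

lemma cs_obs_noise_shift:
  assumes i0: "i0 < N" and \<theta>': "\<And>j. j < N \<Longrightarrow> \<theta>' j = \<theta> j - (if j = i0 then d else 0)"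
  shows "cs_obs N \<sigma> \<theta>' (noise_shift N i0 (\<lambda>t. (1 - \<sigma>) ^ t * d) \<eta>) = cs_obs N \<sigma> \<theta> \<eta>"
proof -
  let ?\<eta>' = "noise_shift N i0 (\<lambda>t. (1 - \<sigma>) ^ t * d) \<eta>"
  have "(\<lambda>i\<in>{..<N}. cs_state N \<sigma> \<theta>' ?\<eta>' t i + ?\<eta>' t i) = (\<lambda>i\<in>{..<N}. cs_state N \<sigma> \<theta> \<eta> t i + \<eta> t i)"
    and "cs_server N \<sigma> \<theta>' ?\<eta>' t = cs_server N \<sigma> \<theta> \<eta> t" for t
    using cs_noise_shift[OF i0 \<theta>', of \<sigma> \<eta> t] by (auto simp: noise_shift_def)
  then show ?thesis unfolding cs_obs_def by (simp del: cs_server.simps)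
qed

lemma cs_measurable:
  assumes comp: "\<And>t i. i < N \<Longrightarrow> (\<lambda>\<eta>. \<eta> t i) \<in> borel_measurable P"
  shows "(\<forall>i. (\<lambda>\<eta>. cs_state N \<sigma> \<theta>0 \<eta> t i) \<in> borel_measurable P) \<and> (\<lambda>\<eta>. cs_server N \<sigma> \<theta>0 \<eta> t) \<in> borel_measurable P"
proof (induction t)
  case 0
  then show ?case using comp by simp
next
  case (Suc t)
  then have state: "\<forall>i. (\<lambda>\<eta>. cs_state N \<sigma> \<theta>0 \<eta> (Suc t) i) \<in> borel_measurable P"
    by (auto simp del: cs_server.simps intro!: borel_measurable_add borel_measurable_times)
  then have "(\<lambda>\<eta>. cs_server N \<sigma> \<theta>0 \<eta> (Suc t)) \<in> borel_measurable P"
    unfolding cs_server.simps[of N \<sigma> \<theta>0 _ "Suc t"] using state comp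
    by (intro borel_measurable_divide borel_measurable_sum borel_measurable_add) (auto simp del: cs_state.simps)
  then show ?case using state by blast
qed

lemma cs_obs_measurable:
  assumes comp: "\<And>t i. i < N \<Longrightarrow> (\<lambda>\<eta>. \<eta> t i) \<in> borel_measurable P"
  shows "cs_obs N \<sigma> \<theta>0 \<in> measurable P (obs_space N)"
  unfolding cs_obs_def obs_space_def
proof (rule measurable_PiM_single')
  fix t :: nat
  have "(\<lambda>\<eta>. cs_state N \<sigma> \<theta>0 \<eta> t i) \<in> borel_measurable P" "(\<lambda>\<eta>. cs_server N \<sigma> \<theta>0 \<eta> t) \<in> borel_measurable P"
    for i using cs_measurable[OF comp] by blast+
  then show "(\<lambda>\<eta>. ((\<lambda>i\<in>{..<N}. cs_state N \<sigma> \<theta>0 \<eta> t i + \<eta> t i), cs_server N \<sigma> \<theta>0 \<eta> t))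
      \<in> measurable P (PiM {..<N} (\<lambda>i. lborel) \<Otimes>\<^sub>M lborel)"
    using comp by (intro measurable_Pair measurable_restrict) auto
qed (auto simp: space_pair_measure space_PiM PiE_def)

lemma noise_space_component_measurable:
  assumes "i < N"
  shows "(\<lambda>\<eta>. \<eta> t i) \<in> borel_measurable (noise_space N c q)"
proof -
  have "(\<lambda>\<eta>. \<eta> t) \<in> measurable (noise_space N c q) (\<Pi>\<^sub>M i\<in>{..<N}. laplace (c * q ^ t))"
    unfolding noise_space_def by (rule measurable_component_singleton) simp
  moreover have "(\<lambda>v. v i) \<in> measurable (\<Pi>\<^sub>M i\<in>{..<N}. laplace (c * q ^ t)) (laplace (c * q ^ t))"
    using assms by (intro measurable_component_singleton) simp
  ultimately have "(\<lambda>\<eta>. \<eta> t i) \<in> measurable (noise_space N c q) (laplace (c * q ^ t))"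
    by (rule measurable_compose)
  then show ?thesis by (simp cong: measurable_cong_sets)
qed

(* The privacy cost of the shift: since the shift decays like (1 - sigma)^t and the
   noise scale like q^t with q > 1 - sigma, the costs |shift t| / scale t form a
   geometric series with ratio (1 - sigma)/q, of sum q |d| / (c (q + sigma - 1)). *)
lemma shift_cost_sums:
  fixes \<sigma> c q d :: real
  assumes "0 < \<sigma>" and "\<sigma> < 1" and "c > 0" and "1 - \<sigma> < q"
  shows "(\<lambda>t. \<bar>(1 - \<sigma>) ^ t * d\<bar> / (c * q ^ t)) sums (q / (c * (q + \<sigma> - 1)) * \<bar>d\<bar>)"
proof -
  define r where "r = (1 - \<sigma>) / q"
  have q: "q > 0" using assms by linarith
  have r: "0 \<le> r" "r < 1" unfolding r_def using assms q by (auto simp: divide_less_eq)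
  have "(\<lambda>t. \<bar>d\<bar> / c * r ^ t) sums (\<bar>d\<bar> / c * (1 / (1 - r)))"
    using r by (intro sums_mult geometric_sums) simp
  moreover have "\<bar>(1 - \<sigma>) ^ t * d\<bar> / (c * q ^ t) = \<bar>d\<bar> / c * r ^ t" for t
    unfolding r_def using assms by (simp add: abs_mult power_divide)
  moreover have "\<bar>d\<bar> / c * (1 / (1 - r)) = q / (c * (q + \<sigma> - 1)) * \<bar>d\<bar>"
    unfolding r_def using assms q by (simp add: field_simps)
  ultimately show ?thesis by simp
qed

theorem mainTheorem1:
  fixes N :: nat and \<sigma> c q \<delta> :: real and \<theta> \<theta>' :: "nat \<Rightarrow> real"
    and Obs :: "(nat \<Rightarrow> (nat \<Rightarrow> real) \<times> real) set"
  assumes "N \<ge> 1" and "0 < \<sigma>" and "\<sigma> < 1" and "c > 0"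
    and "1 - \<sigma> < q" and "q < 1"
    and "\<delta> \<ge> 0" and "adjacent N \<delta> \<theta> \<theta>'"
    and "Obs \<in> sets (obs_space N)"
  shows "measure (noise_space N c q) {\<eta> \<in> space (noise_space N c q). cs_obs N \<sigma> \<theta> \<eta> \<in> Obs}
    \<le> exp (q / (c * (q + \<sigma> - 1)) * \<delta>) *
      measure (noise_space N c q) {\<eta> \<in> space (noise_space N c q). cs_obs N \<sigma> \<theta>' \<eta> \<in> Obs}"
proof -
  let ?P = "noise_space N c q" and ?\<epsilon> = "q / (c * (q + \<sigma> - 1))"
  obtain i0 where i0: "i0 < N" "\<bar>\<theta> i0 - \<theta>' i0\<bar> \<le> \<delta>" "\<forall>j<N. j \<noteq> i0 \<longrightarrow> \<theta> j = \<theta>' j"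
    using assms(8) unfolding adjacent_def by blast
  define d where "d = \<theta> i0 - \<theta>' i0"
  define S where "S = noise_shift N i0 (\<lambda>t. (1 - \<sigma>) ^ t * d)"
  have q: "q > 0" using assms(3,5) by linarith
  have cost: "(\<lambda>t. \<bar>(1 - \<sigma>) ^ t * d\<bar> / (c * q ^ t)) sums (?\<epsilon> * \<bar>d\<bar>)"
    using assms(2-5) by (rule shift_cost_sums)
  have "dominated (distr ?P ?P S) ?P (ennreal (exp (?\<epsilon> * \<bar>d\<bar>)))"
    using noise_shift_dominated[of "\<lambda>t. c * q ^ t" i0 N "\<lambda>t. (1 - \<sigma>) ^ t * d"] assms(4) q i0(1) cost
    unfolding S_def noise_space_def by (simp add: sums_iff)
  moreover have "ennreal (exp (?\<epsilon> * \<bar>d\<bar>)) \<le> ennreal (exp (?\<epsilon> * \<delta>))"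
    using i0(2) assms(3-6) unfolding d_def by (intro ennreal_leI exp_mono mult_left_mono) auto
  ultimately have dom: "dominated (distr ?P ?P S) ?P (ennreal (exp (?\<epsilon> * \<delta>)))"
    by (rule dominated_mono)
  have prob: "prob_space ?P"
    unfolding noise_space_def using assms(4) q by (intro prob_space_PiM prob_space_laplace) simp
  have S_meas: "S \<in> measurable ?P ?P"
    unfolding S_def noise_space_def by (rule noise_shift_measurable)
  have obs_eq: "cs_obs N \<sigma> \<theta>' (S \<eta>) = cs_obs N \<sigma> \<theta> \<eta>" for \<eta>
    unfolding S_def using i0(1,3) by (intro cs_obs_noise_shift) (auto simp: d_def)
  have obs_meas: "cs_obs N \<sigma> \<theta>' \<in> measurable ?P (obs_space N)"
    by (intro cs_obs_measurable noise_space_component_measurable)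
  show ?thesis
    using measure_le_by_coupling[OF prob S_meas dom _ obs_meas assms(9)] obs_eq by simp
qed

end
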